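(* Fix $0<p<1$, $q=1-p$, and integers $L<U$ with $U-L\ge 4$. With the notation of the context, for every integer $k\ge 2$ the functions $m_k(x)=\mathbb{E}\tau^x_k$ ($x$ an integer in $[L,U]$) satisfy $$m_k(x)=\begin{cases}0,&x=U,\\ 1+q\,m_{k-1}(x-1),&x=U-1,\\ 1+p+pq\,m_{k-2}(x)+q\,m_{k-1}(x-1),&x=U-2,\\ 1+pq\,m_{k-2}(x)+p\,m_{k-1}(x+2)-pq\,m_{k-2}(x+1)+q\,m_{k-1}(x-1),&L+1\le x\le U-3,\\ 0,&x=L,\end{cases}$$ and the family $(m_k)$ is the unique solution of this system of linear difference equations.
   Context: Let $\xi_1,\xi_2,\dots$ be i.i.d. random variables with values in $\{1,-1\}$, $\mathbb{P}(\xi_i=1)=p$, $\mathbb{P}(\xi_i=-1)=q:=1-p$. Define $X_k=-1$ if $\xi_k=-1$; $X_k=2$ if $\xi_k=\xi_{k-1}=1$ (for $k\ge 2$); and $X_k=1$ otherwise (in particular $X_1=1$ when $\xi_1=1$). Let $S_0=0$, $S_k=X_1+\dots+X_k$, and $S^x_k=x+S_k$. For $k\ge 0$ let $\tau^x_k=\min\{l\in\{0,\dots,k\}: S^x_l\le L \text{ or } S^x_l\ge U\}$ if this set is nonempty, and $\tau^x_k=k$ otherwise. *)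

theory Defs
  imports "HOL-Probability.Probability"
begin

definition walk_X :: "(nat \<Rightarrow> 'a \<Rightarrow> int) \<Rightarrow> nat \<Rightarrow> 'a \<Rightarrow> int" where
  "walk_X xi k \<omega> =
     (if xi k \<omega> = -1 then -1
      else if k \<ge> 2 \<and> xi k \<omega> = 1 \<and> xi (k - 1) \<omega> = 1 then 2
      else 1)"

definition walk_S :: "(nat \<Rightarrow> 'a \<Rightarrow> int) \<Rightarrow> nat \<Rightarrow> 'a \<Rightarrow> int" where
  "walk_S xi k \<omega> = (\<Sum>i\<in>{1..k}. walk_X xi i \<omega>)"

definition walk_tau :: "int \<Rightarrow> int \<Rightarrow> (nat \<Rightarrow> 'a \<Rightarrow> int) \<Rightarrow> int \<Rightarrow> nat \<Rightarrow> 'a \<Rightarrow> nat" where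
  "walk_tau L U xi x k \<omega> =
     (if \<exists>l\<le>k. x + walk_S xi l \<omega> \<le> L \<or> x + walk_S xi l \<omega> \<ge> U
      then (LEAST l. l \<le> k \<and> (x + walk_S xi l \<omega> \<le> L \<or> x + walk_S xi l \<omega> \<ge> U))
      else k)"

definition solves_system :: "real \<Rightarrow> real \<Rightarrow> int \<Rightarrow> int \<Rightarrow> (nat \<Rightarrow> int \<Rightarrow> real) \<Rightarrow> bool" where
  "solves_system p q L U f \<longleftrightarrow>
     (\<forall>k\<ge>2. \<forall>x\<in>{L..U}. f k x =
        (if x = U then 0
         else if x = U - 1 then 1 + q * f (k - 1) (x - 1)
         else if x = U - 2 then 1 + p + p * q * f (k - 2) x + q * f (k - 1) (x - 1)
         else if x = L then 0
         else 1 + p * q * f (k - 2) x + p * f (k - 1) (x + 2)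
                - p * q * f (k - 2) (x + 1) + q * f (k - 1) (x - 1)))"

end

theory Submission
  imports Defs
begin

(*
  Only the first k signs matter for tau_k, so E tau_k is a finite sum over sign patterns, each
  weighted by a product of p's and q's.  Since X_k depends on xi_{k-1}, this sum is the expected
  exit time of a Markov chain on pairs (previous sign, position), started with previous sign -1;
  conditioning on the first step gives a recursion in k for both kinds of state.  The auxiliary
  state (+, y) is eliminated by comparing it with the fresh state (-, y + 1): both move to
  (+, y + 2) on a + sign and differ only after a - sign, which yields the second-order system.
  Uniqueness follows by induction on k, since the right-hand sides only involve levels k - 1
  and k - 2 at points of [L, U].
*)

definition walk_step :: "bool \<Rightarrow> bool \<Rightarrow> int" where
  "walk_step prev b = (if b then (if prev then 2 else 1) else -1)"

lemma walk_step_simps [simp]: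
  "walk_step True True = 2" "walk_step False True = 1" "walk_step prev False = -1"
  by (simp_all add: walk_step_def)

fun exit_time :: "int \<Rightarrow> int \<Rightarrow> bool \<Rightarrow> int \<Rightarrow> bool list \<Rightarrow> nat" where
  "exit_time L U prev x [] = 0"
| "exit_time L U prev x (b # bs) =
     (if x \<le> L \<or> x \<ge> U then 0 else Suc (exit_time L U b (x + walk_step prev b) bs))"

definition first_exit :: "int \<Rightarrow> int \<Rightarrow> (nat \<Rightarrow> int) \<Rightarrow> int \<Rightarrow> nat \<Rightarrow> nat" where
  "first_exit L U d x k =
     (if \<exists>l\<le>k. x + (\<Sum>j<l. d j) \<le> L \<or> x + (\<Sum>j<l. d j) \<ge> U
      then (LEAST l. l \<le> k \<and> (x + (\<Sum>j<l. d j) \<le> L \<or> x + (\<Sum>j<l. d j) \<ge> U))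
      else k)"

lemma first_exit_Suc:
  "first_exit L U d x (Suc k) =
     (if x \<le> L \<or> x \<ge> U then 0 else Suc (first_exit L U (\<lambda>j. d (Suc j)) (x + d 0) k))"
proof (cases "x \<le> L \<or> x \<ge> U")
  case True
  then show ?thesis
    unfolding first_exit_def by (auto intro!: Least_equality)
next
  case inside: False
  define P where "P l \<longleftrightarrow> l \<le> Suc k \<and> (x + (\<Sum>j<l. d j) \<le> L \<or> x + (\<Sum>j<l. d j) \<ge> U)" for l
  have not_P0: "\<not> P 0"
    using inside by (simp add: P_def)
  have P_Suc: "P (Suc l) \<longleftrightarrow> l \<le> k \<and>
      (x + d 0 + (\<Sum>j<l. d (Suc j)) \<le> L \<or> x + d 0 + (\<Sum>j<l. d (Suc j)) \<ge> U)" for l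
    unfolding P_def sum.lessThan_Suc_shift by (simp add: add.assoc)
  have ex_P: "(\<exists>l. P l) \<longleftrightarrow> (\<exists>l. P (Suc l))"
    using not_P0 by (metis not0_implies_Suc)
  show ?thesis
  proof (cases "\<exists>l. P l")
    case True
    then have "Least P = Suc (LEAST l. P (Suc l))"
      using not_P0 by (blast intro: Least_Suc)
    then show ?thesis
      using inside True ex_P unfolding first_exit_def P_Suc[symmetric]
      by (simp add: P_def[symmetric] del: P_Suc)
  next
    case False
    then show ?thesis
      using inside ex_P unfolding first_exit_def P_Suc[symmetric]
      by (simp add: P_def[symmetric] del: P_Suc)
  qed
qed

lemma first_exit_eq_exit_time:
  assumes "length bs = k"
    and "\<And>j. j < k \<Longrightarrow> d j = walk_step (if j = 0 then prev else bs ! (j - 1)) (bs ! j)"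
  shows "first_exit L U d x k = exit_time L U prev x bs"
  using assms
proof (induction bs arbitrary: prev x d k)
  case Nil
  then show ?case by (simp add: first_exit_def)
next
  case (Cons b bs)
  then obtain n where k: "k = Suc n" and n: "length bs = n" by auto
  have "d 0 = walk_step prev b"
    using Cons.prems(2)[of 0] k by simp
  moreover have "first_exit L U (\<lambda>j. d (Suc j)) y n = exit_time L U b y bs" for y
    using Cons.prems(2) by (intro Cons.IH[OF n]) (auto simp: k)
  ultimately show ?case
    by (simp add: k first_exit_Suc)
qed

definition sign_pattern :: "(nat \<Rightarrow> 'a \<Rightarrow> int) \<Rightarrow> nat \<Rightarrow> 'a \<Rightarrow> bool list" where
  "sign_pattern xi k \<omega> = map (\<lambda>j. xi (Suc j) \<omega> = 1) [0..<k]"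

lemma length_sign_pattern [simp]: "length (sign_pattern xi k \<omega>) = k"
  by (simp add: sign_pattern_def)

lemma walk_tau_eq_exit_time:
  assumes "\<And>i. i \<in> {1..k} \<Longrightarrow> xi i \<omega> = 1 \<or> xi i \<omega> = -1"
  shows "walk_tau L U xi x k \<omega> = exit_time L U False x (sign_pattern xi k \<omega>)"
proof -
  have "walk_S xi l \<omega> = (\<Sum>j<l. walk_X xi (Suc j) \<omega>)" for l
    unfolding walk_S_def by (simp add: sum.atLeast1_atMost_eq)
  then have "walk_tau L U xi x k \<omega> = first_exit L U (\<lambda>j. walk_X xi (Suc j) \<omega>) x k"
    unfolding walk_tau_def first_exit_def by presburger
  also have "\<dots> = exit_time L U False x (sign_pattern xi k \<omega>)"
  proof (rule first_exit_eq_exit_time)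
    fix j assume "j < k"
    then have "xi (Suc j) \<omega> = 1 \<or> xi (Suc j) \<omega> = -1" "0 < j \<Longrightarrow> xi j \<omega> = 1 \<or> xi j \<omega> = -1"
      using assms by auto
    with \<open>j < k\<close> show "walk_X xi (Suc j) \<omega> =
        walk_step (if j = 0 then False else sign_pattern xi k \<omega> ! (j - 1)) (sign_pattern xi k \<omega> ! j)"
      by (cases j) (auto simp: walk_X_def walk_step_def sign_pattern_def)
  qed simp
  finally show ?thesis .
qed

definition path_weight :: "real \<Rightarrow> real \<Rightarrow> bool list \<Rightarrow> real" where
  "path_weight p q bs = (\<Prod>b\<leftarrow>bs. if b then p else q)"

lemma path_weight_simps [simp]:
  "path_weight p q [] = 1"
  "path_weight p q (b # bs) = (if b then p else q) * path_weight p q bs"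
  by (simp_all add: path_weight_def)

lemma finite_lists_of_length: "finite {bs :: bool list. length bs = n}"
  using finite_lists_length_eq[of "UNIV :: bool set" n] by simp

lemma sum_lists_of_length_Suc:
  "(\<Sum>bs | length bs = Suc n. f bs) =
     (\<Sum>bs | length bs = n. f (True # bs)) + (\<Sum>bs | length bs = n. f (False # bs))"
proof -
  have "{bs :: bool list. length bs = Suc n} =
      Cons True ` {bs. length bs = n} \<union> Cons False ` {bs. length bs = n}"
    by (auto simp: length_Suc_conv image_iff)
  then show ?thesis
    by (simp, subst sum.union_disjoint) (auto simp: finite_lists_of_length sum.reindex)
qed

lemma sum_path_weight:
  assumes "p + q = 1"
  shows "(\<Sum>bs | length bs = n. path_weight p q bs) = 1"
  by (induction n) (simp_all add: assms sum_lists_of_length_Suc flip: sum_distrib_left distrib_right)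

fun expected_exit :: "real \<Rightarrow> real \<Rightarrow> int \<Rightarrow> int \<Rightarrow> bool \<Rightarrow> int \<Rightarrow> nat \<Rightarrow> real" where
  "expected_exit p q L U prev x 0 = 0"
| "expected_exit p q L U prev x (Suc n) =
     (if x \<le> L \<or> x \<ge> U then 0
      else 1 + p * expected_exit p q L U True (x + walk_step prev True) n
             + q * expected_exit p q L U False (x - 1) n)"

lemma sum_exit_time_path_weight:
  assumes "p + q = 1"
  shows "(\<Sum>bs | length bs = n. real (exit_time L U prev x bs) * path_weight p q bs) =
    expected_exit p q L U prev x n"
proof (induction n arbitrary: prev x)
  case (Suc n)
  show ?case
  proof (cases "x \<le> L \<or> x \<ge> U")
    case False
    then have "(\<Sum>bs | length bs = Suc n. real (exit_time L U prev x bs) * path_weight p q bs) =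
        (p + q) * (\<Sum>bs | length bs = n. path_weight p q bs)
        + p * (\<Sum>bs | length bs = n.
                 real (exit_time L U True (x + walk_step prev True) bs) * path_weight p q bs)
        + q * (\<Sum>bs | length bs = n. real (exit_time L U False (x - 1) bs) * path_weight p q bs)"
      by (simp add: sum_lists_of_length_Suc sum_distrib_left sum.distrib algebra_simps)
    then show ?thesis
      using False by (simp add: Suc.IH sum_path_weight assms)
  qed (simp add: sum_lists_of_length_Suc)
qed simp

lemma (in prob_space) expectation_finite_values:
  fixes g :: "'b \<Rightarrow> real"
  assumes "finite B" and V: "\<And>\<omega>. \<omega> \<in> space M \<Longrightarrow> V \<omega> \<in> B"
    and events: "\<And>b. b \<in> B \<Longrightarrow> {\<omega>\<in>space M. V \<omega> = b} \<in> events"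
  shows "expectation (\<lambda>\<omega>. g (V \<omega>)) = (\<Sum>b\<in>B. g b * prob {\<omega>\<in>space M. V \<omega> = b})"
proof -
  have "expectation (\<lambda>\<omega>. g (V \<omega>)) =
      expectation (\<lambda>\<omega>. \<Sum>b\<in>B. g b * indicator {\<omega>\<in>space M. V \<omega> = b} \<omega>)"
    using \<open>finite B\<close> V
    by (intro Bochner_Integration.integral_cong) (auto simp: indicator_def if_distrib sum.delta)
  also have "\<dots> = (\<Sum>b\<in>B. g b * prob {\<omega>\<in>space M. V \<omega> = b})"
    using events by (simp add: integrable_real_indicator emeasure_eq_measure)
  finally show ?thesis .
qed

context prob_space
begin

lemma
  assumes indep: "indep_vars (\<lambda>_. count_space UNIV) xi {1..}"
    and prob_plus: "\<forall>i\<ge>1. prob {\<omega>\<in>space M. xi i \<omega> = 1} = p"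
    and "length bs = k"
  shows sign_pattern_event: "{\<omega>\<in>space M. sign_pattern xi k \<omega> = bs} \<in> events"
    and prob_sign_pattern: "prob {\<omega>\<in>space M. sign_pattern xi k \<omega> = bs} = path_weight p (1 - p) bs"
proof -
  define A where "A i = {\<omega>\<in>space M. (xi i \<omega> = 1) = bs ! (i - 1)}" for i
  have indep_A: "indep_events A {1..}"
    unfolding A_def by (rule indep_eventsI_indep_vars[OF indep]) auto
  have A_events: "A i \<in> events" if "i \<ge> 1" for i
    using indep_A that unfolding indep_events_def by auto
  have prob_A: "prob (A (Suc j)) = (if bs ! j then p else 1 - p)" for j
  proof (cases "bs ! j")
    case False
    then have "space M - A (Suc j) = {\<omega>\<in>space M. xi (Suc j) \<omega> = 1}"
      by (auto simp: A_def)
    then show ?thesis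
      using False prob_plus prob_compl[OF A_events, of "Suc j"] by simp
  qed (use prob_plus in \<open>simp add: A_def\<close>)
  have event_eq: "{\<omega>\<in>space M. sign_pattern xi k \<omega> = bs} =
      (if k = 0 then space M else (\<Inter>i\<in>Suc ` {..<k}. A i))"
    using \<open>length bs = k\<close> by (auto simp: A_def sign_pattern_def list_eq_iff_nth_eq)
  show "{\<omega>\<in>space M. sign_pattern xi k \<omega> = bs} \<in> events"
    unfolding event_eq using A_events by auto
  show "prob {\<omega>\<in>space M. sign_pattern xi k \<omega> = bs} = path_weight p (1 - p) bs"
  proof (cases "k = 0")
    case False
    have "Suc ` {..<k} \<subseteq> {1..}" "Suc ` {..<k} \<noteq> {}" "finite (Suc ` {..<k})"
      using False by auto
    then have "prob (\<Inter>i\<in>Suc ` {..<k}. A i) = (\<Prod>i\<in>Suc ` {..<k}. prob (A i))"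
      using indep_A unfolding indep_events_def by blast
    also have "\<dots> = (\<Prod>j<k. if bs ! j then p else 1 - p)"
      by (simp add: prod.reindex prob_A)
    also have "\<dots> = path_weight p (1 - p) bs"
      using \<open>length bs = k\<close> by (simp add: path_weight_def prod.list_conv_set_nth atLeast0LessThan)
    finally show ?thesis
      using False by (simp add: event_eq)
  qed (use \<open>length bs = k\<close> in \<open>simp add: sign_pattern_def prob_space\<close>)
qed

lemma expectation_walk_tau:
  assumes indep: "indep_vars (\<lambda>_. count_space UNIV) xi {1..}"
    and signs: "\<forall>i\<ge>1. \<forall>\<omega>\<in>space M. xi i \<omega> = 1 \<or> xi i \<omega> = -1"
    and prob_plus: "\<forall>i\<ge>1. prob {\<omega>\<in>space M. xi i \<omega> = 1} = p"
  shows "expectation (\<lambda>\<omega>. real (walk_tau L U xi x k \<omega>)) = expected_exit p (1 - p) L U False x k"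
proof -
  have "expectation (\<lambda>\<omega>. real (walk_tau L U xi x k \<omega>)) =
      expectation (\<lambda>\<omega>. real (exit_time L U False x (sign_pattern xi k \<omega>)))"
    by (intro Bochner_Integration.integral_cong refl arg_cong[where f = real] walk_tau_eq_exit_time)
      (use signs in auto)
  also have "\<dots> = (\<Sum>bs | length bs = k.
      real (exit_time L U False x bs) * prob {\<omega>\<in>space M. sign_pattern xi k \<omega> = bs})"
    by (rule expectation_finite_values)
      (simp_all add: finite_lists_of_length sign_pattern_event[OF indep prob_plus])
  also have "\<dots> = (\<Sum>bs | length bs = k. real (exit_time L U False x bs) * path_weight p (1 - p) bs)"
    by (simp add: prob_sign_pattern[OF indep prob_plus])
  also have "\<dots> = expected_exit p (1 - p) L U False x k"
    by (simp add: sum_exit_time_path_weight)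
  finally show ?thesis .
qed

end

lemma expected_exit_out_of_range:
  "x \<le> L \<or> x \<ge> U \<Longrightarrow> expected_exit p q L U prev x n = 0"
  by (cases n) simp_all

lemma expected_exit_after_up_step:
  assumes "L < y" "y + 1 < U"
  shows "expected_exit p q L U True y (Suc n) =
    expected_exit p q L U False (y + 1) (Suc n)
    + q * (expected_exit p q L U False (y - 1) n - expected_exit p q L U False y n)"
  using assms by (simp add: algebra_simps)

lemma solves_system_expected_exit:
  assumes "U - L \<ge> 3"
  shows "solves_system p q L U (\<lambda>k x. expected_exit p q L U False x k)"
  unfolding solves_system_def
proof (intro allI impI ballI)
  fix k :: nat and x :: int
  assume "2 \<le> k" and x: "x \<in> {L..U}"
  then obtain n where k: "k = Suc (Suc n)"
    by (metis add_2_eq_Suc le_Suc_ex)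
  let ?E = "expected_exit p q L U"
  consider "x = U" | "x = U - 1" | "x = U - 2" | "x = L" | "L < x" "x < U - 2"
    using x by force
  then show "?E False x k =
    (if x = U then 0
     else if x = U - 1 then 1 + q * ?E False (x - 1) (k - 1)
     else if x = U - 2 then 1 + p + p * q * ?E False x (k - 2) + q * ?E False (x - 1) (k - 1)
     else if x = L then 0
     else 1 + p * q * ?E False x (k - 2) + p * ?E False (x + 2) (k - 1)
            - p * q * ?E False (x + 1) (k - 2) + q * ?E False (x - 1) (k - 1))"
  proof cases
    case 1
    then show ?thesis by (simp add: k)
  next
    case 2
    then show ?thesis using assms by (simp add: k)
  next
    case 3
    then show ?thesis
      using assms by (simp add: k algebra_simps expected_exit_out_of_range)
  next
    case 4
    then show ?thesis using assms by (simp add: k)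
  next
    case 5
    have "?E False x k = 1 + p * ?E True (x + 1) (Suc n) + q * ?E False (x - 1) (Suc n)"
      unfolding k by (subst expected_exit.simps) (use 5 in simp)
    also have "?E True (x + 1) (Suc n) =
        ?E False (x + 2) (Suc n) + q * (?E False x n - ?E False (x + 1) n)"
      using 5 expected_exit_after_up_step[of L "x + 1" U p q n] by (simp add: add.commute)
    finally show ?thesis
      using 5 by (simp add: k algebra_simps del: expected_exit.simps)
  qed
qed

lemma solves_system_unique:
  assumes "U - L \<ge> 3"
    and f: "solves_system p q L U f" and g: "solves_system p q L U g"
    and initial: "\<forall>x\<in>{L..U}. f 0 x = g 0 x \<and> f 1 x = g 1 x"
  shows "x \<in> {L..U} \<Longrightarrow> f k x = g k x"
proof (induction k arbitrary: x rule: less_induct)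
  case (less k)
  show ?case
  proof (cases "k < 2")
    case True
    then show ?thesis
      using initial less.prems by (auto simp: less_2_cases_iff)
  next
    case False
    then obtain n where k: "k = Suc (Suc n)"
      by (metis add_2_eq_Suc leI le_Suc_ex)
    have IH: "f (Suc n) y = g (Suc n) y" "f n y = g n y" if "y \<in> {L..U}" for y
      using less.IH that k by auto
    define R where "R h =
      (if x = U then 0
       else if x = U - 1 then 1 + q * h (k - 1) (x - 1)
       else if x = U - 2 then 1 + p + p * q * h (k - 2) x + q * h (k - 1) (x - 1)
       else if x = L then 0
       else 1 + p * q * h (k - 2) x + p * h (k - 1) (x + 2)
              - p * q * h (k - 2) (x + 1) + q * h (k - 1) (x - 1))" for h :: "nat \<Rightarrow> int \<Rightarrow> real"
    have "f k x = R f" "g k x = R g"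
      using f g less.prems False unfolding solves_system_def R_def by auto
    moreover have "R f = R g"
      using less.prems assms unfolding R_def k by (auto simp: IH)
    ultimately show ?thesis
      by simp
  qed
qed

theorem theorem3p1:
  fixes M :: "'a measure" and xi :: "nat \<Rightarrow> 'a \<Rightarrow> int"
    and p q :: real and L U :: int
    and m :: "nat \<Rightarrow> int \<Rightarrow> real"
  assumes "prob_space M"
    and "0 < p" and "p < 1" and "q = 1 - p"
    and "U - L \<ge> 4"
    and "prob_space.indep_vars M (\<lambda>_. count_space UNIV) xi {1..}"
    and "\<forall>i\<ge>1. \<forall>\<omega>\<in>space M. xi i \<omega> = 1 \<or> xi i \<omega> = -1"
    and "\<forall>i\<ge>1. measure M {\<omega>\<in>space M. xi i \<omega> = 1} = p"
    and "\<forall>k x. m k x = integral\<^sup>L M (\<lambda>\<omega>. real (walk_tau L U xi x k \<omega>))"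
  shows "solves_system p q L U m \<and>
         (\<forall>f. solves_system p q L U f \<and> (\<forall>x\<in>{L..U}. f 0 x = m 0 x \<and> f 1 x = m 1 x)
              \<longrightarrow> (\<forall>k. \<forall>x\<in>{L..U}. f k x = m k x))"
proof -
  have m_eq: "m = (\<lambda>k x. expected_exit p q L U False x k)"
    using prob_space.expectation_walk_tau[OF assms(1,6,7,8)] assms(4,9) by (intro ext) simp
  have "U - L \<ge> 3"
    using assms(5) by simp
  then have solution: "solves_system p q L U m"
    unfolding m_eq by (rule solves_system_expected_exit)
  then show ?thesis
    using solves_system_unique[OF \<open>U - L \<ge> 3\<close> _ solution] by blast
qed

end
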